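(* Suppose that $G \leq \mathrm{Homeo}^+(\mathbb{R})$ acts on $\mathbb{R}$ with no fixed points, and that $G^0 \neq 1$. Then the transitivity degree of $G$ is at most $2$.
   Context: $\mathrm{Homeo}^+(\mathbb{R})$ is the group of orientation-preserving homeomorphisms of $\mathbb{R}$, and $G^0$ is the subgroup of compactly supported elements of $G$. The transitivity degree of a group is the supremum of all $k$ such that it admits a faithful action on a set that is transitive on ordered $k$-tuples of distinct elements. *)

theory Defs
  imports "HOL-Analysis.Analysis"
begin

definition homeo_plus :: "(real \<Rightarrow> real) \<Rightarrow> bool" where
  "homeo_plus f \<longleftrightarrow> strict_mono f \<and> (\<exists>g. homeomorphism UNIV UNIV f g)"

definition subgroup_homeo_plus :: "(real \<Rightarrow> real) set \<Rightarrow> bool" where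
  "subgroup_homeo_plus G \<longleftrightarrow>
     (\<forall>g\<in>G. homeo_plus g) \<and> id \<in> G \<and>
     (\<forall>g\<in>G. \<forall>h\<in>G. g \<circ> h \<in> G) \<and> (\<forall>g\<in>G. inv g \<in> G)"

definition compactly_supported :: "(real \<Rightarrow> real) \<Rightarrow> bool" where
  "compactly_supported g \<longleftrightarrow> compact (closure {x. g x \<noteq> x})"

definition group_action_on ::
  "(real \<Rightarrow> real) set \<Rightarrow> 'x set \<Rightarrow> ((real \<Rightarrow> real) \<Rightarrow> 'x \<Rightarrow> 'x) \<Rightarrow> bool" where
  "group_action_on G X act \<longleftrightarrow>
     (\<forall>g\<in>G. \<forall>x\<in>X. act g x \<in> X) \<and>
     (\<forall>x\<in>X. act id x = x) \<and>
     (\<forall>g\<in>G. \<forall>h\<in>G. \<forall>x\<in>X. act (g \<circ> h) x = act g (act h x))"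

definition faithful_action ::
  "(real \<Rightarrow> real) set \<Rightarrow> 'x set \<Rightarrow> ((real \<Rightarrow> real) \<Rightarrow> 'x \<Rightarrow> 'x) \<Rightarrow> bool" where
  "faithful_action G X act \<longleftrightarrow>
     (\<forall>g\<in>G. (\<forall>x\<in>X. act g x = x) \<longrightarrow> g = id)"

text \<open>Transitive on ordered k-tuples of distinct elements (the set of such tuples
  must be nonempty, as transitive actions are on nonempty sets).\<close>
definition k_transitive ::
  "(real \<Rightarrow> real) set \<Rightarrow> 'x set \<Rightarrow> ((real \<Rightarrow> real) \<Rightarrow> 'x \<Rightarrow> 'x) \<Rightarrow> nat \<Rightarrow> bool" where
  "k_transitive G X act k \<longleftrightarrow>
     (\<exists>t. (\<forall>i<k. t i \<in> X) \<and> inj_on t {..<k}) \<and>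
     (\<forall>s t. (\<forall>i<k. s i \<in> X) \<and> inj_on s {..<k} \<and>
            (\<forall>i<k. t i \<in> X) \<and> inj_on t {..<k} \<longrightarrow>
            (\<exists>g\<in>G. \<forall>i<k. act g (s i) = t i))"

end

theory Submission
  imports Defs
begin

text \<open>
  For x, y in X let thresholds x y be the set of reals t such that some element of G whose
  support lies in a bounded interval to the left of t carries x to y. These sets are upward
  closed, hence pairwise comparable, and equivariant: h maps thresholds x y onto
  thresholds (h x) (h y). A 3-cycle h of x, y, z, which exists by 3-transitivity, permutes
  thresholds x y, thresholds y z, thresholds z x cyclically; comparability then forces them to
  be equal, so all threshold sets coincide with one G-invariant upward closed set P.
  P is nonempty because G contains a nontrivial compactly supported element, and P is all of R,
  since otherwise Inf P would be a common fixed point of G.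

  Then x0 can be carried to y0 by elements m1, m2 supported in disjoint intervals. The element
  c = m1^-1 m2 fixes x0 and commutes with elements supported further to the left, which carry
  x0 to any other point of X. Hence c acts trivially, so c = id by faithfulness, and m1 = m2
  has empty support, contradicting m1 x0 = y0.
\<close>

definition moved :: "('a \<Rightarrow> 'a) \<Rightarrow> 'a set" where
  "moved f = {x. f x \<noteq> x}"

lemma moved_empty_iff: "moved f = {} \<longleftrightarrow> f = id"
  by (auto simp: moved_def fun_eq_iff)

lemma moved_comp: "moved (f \<circ> g) \<subseteq> moved f \<union> moved g"
  by (auto simp: moved_def)

lemma moved_inv: "bij f \<Longrightarrow> moved (inv f) = moved f"
  unfolding moved_def by (metis bij_inv_eq_iff)

lemma moved_conj: "bij h \<Longrightarrow> moved (h \<circ> f \<circ> inv h) = h ` moved f"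
  by (auto simp: moved_def bij_inv_eq_iff image_iff) (metis bij_inv_eq_iff)+

lemma comp_commute_if_disjoint_moved:
  assumes "inj f" "inj g" "moved f \<inter> moved g = {}"
  shows "f \<circ> g = g \<circ> f"
proof
  have commute_at: "u (v x) = v (u x)"
    if "x \<in> moved u" "inj u" "moved u \<inter> moved v = {}" for u v :: "'a \<Rightarrow> 'a" and x
  proof -
    have "u x \<in> moved u" using that(1,2) by (auto simp: moved_def dest: injD)
    with that(1,3) have "v x = x" "v (u x) = u x" by (auto simp: moved_def)
    then show ?thesis by simp
  qed
  fix x
  show "(f \<circ> g) x = (g \<circ> f) x"
  proof (cases "x \<in> moved f")
    case True
    then show ?thesis using commute_at[of x f g] assms by simp
  next
    case f_fixes: False
    show ?thesis
    proof (cases "x \<in> moved g")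
      case True
      then show ?thesis using commute_at[of x g f] assms by (simp add: Int_commute)
    qed (use f_fixes in \<open>simp add: moved_def\<close>)
  qed
qed

lemma vimage_3cycle_eq:
  assumes "P = f -` Q" "Q = f -` R" "R = f -` P" and "P \<subseteq> Q \<or> Q \<subseteq> P"
  shows "P = Q"
  using assms(4)
proof
  assume "P \<subseteq> Q"
  then have "R \<subseteq> P" using assms(1,3) by blast
  then have "Q \<subseteq> R" using assms(2,3) by blast
  with \<open>P \<subseteq> Q\<close> \<open>R \<subseteq> P\<close> show ?thesis by blast
next
  assume "Q \<subseteq> P"
  then have "P \<subseteq> R" using assms(1,3) by blast
  then have "R \<subseteq> Q" using assms(2,3) by blast
  with \<open>Q \<subseteq> P\<close> \<open>P \<subseteq> R\<close> show ?thesis by blast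
qed

lemma upsets_comparable:
  fixes A B :: "'a::linorder set"
  assumes "\<And>s t. s \<in> A \<Longrightarrow> s \<le> t \<Longrightarrow> t \<in> A" "\<And>s t. s \<in> B \<Longrightarrow> s \<le> t \<Longrightarrow> t \<in> B"
  shows "A \<subseteq> B \<or> B \<subseteq> A"
  using assms by (meson linear subsetI)

lemma extend_inj_tuple:
  fixes k m :: nat
  assumes t: "inj_on t {..<k}" "t ` {..<k} \<subseteq> X"
    and s: "inj_on s {..<m}" "s ` {..<m} \<subseteq> X" and "m \<le> k"
  obtains s' where "inj_on s' {..<k}" "s' ` {..<k} \<subseteq> X" "\<forall>i<m. s' i = s i"
proof -
  define F where "F = t ` {..<k} - s ` {..<m}"
  have "card (t ` {..<k}) - card (s ` {..<m}) \<le> card F"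
    unfolding F_def by (rule diff_card_le_card_Diff) auto
  then have "card {m..<k} \<le> card F"
    using t(1) s(1) by (simp add: card_image)
  then obtain e where e: "e ` {m..<k} \<subseteq> F" "inj_on e {m..<k}"
    using card_le_inj[of "{m..<k}" F] by (auto simp: F_def)
  define s' where "s' i = (if i < m then s i else e i)" for i
  have split: "{..<k} = {..<m} \<union> {m..<k}"
    using \<open>m \<le> k\<close> by auto
  have "inj_on s' {..<m}" "inj_on s' {m..<k}"
    using s(1) e(2) by (auto simp: s'_def inj_on_def)
  moreover have "s' ` {..<m} \<inter> s' ` {m..<k} = {}"
    using e(1) by (auto simp: s'_def F_def)
  ultimately have "inj_on s' {..<k}"
    unfolding split by (auto simp: inj_on_Un)
  moreover have "s' ` {..<k} \<subseteq> X"
  proof -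
    have "F \<subseteq> X" using t(2) by (auto simp: F_def)
    then have "e ` {m..<k} \<subseteq> X" using e(1) by blast
    then show ?thesis using s(2) by (auto simp: s'_def image_subset_iff not_less)
  qed
  ultimately show ?thesis
    using that by (simp add: s'_def)
qed

lemma k_transitive_map:
  assumes "k_transitive G X act k" "length xs \<le> k" "length ys = length xs"
    and "distinct xs" "distinct ys" "set xs \<subseteq> X" "set ys \<subseteq> X"
  obtains g where "g \<in> G" "map (act g) xs = ys"
proof -
  obtain t where "\<forall>i<k. t i \<in> X" "inj_on t {..<k}"
    using assms(1) by (auto simp: k_transitive_def)
  then have t: "inj_on t {..<k}" "t ` {..<k} \<subseteq> X"
    by auto
  have extends: "\<exists>s. (\<forall>i<k. s i \<in> X) \<and> inj_on s {..<k} \<and> (\<forall>i<length zs. s i = zs ! i)"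
    if "distinct zs" "set zs \<subseteq> X" "length zs \<le> k" for zs
  proof -
    have "inj_on (nth zs) {..<length zs}" "nth zs ` {..<length zs} \<subseteq> X"
      using that by (auto simp: inj_on_nth)
    then show ?thesis
      using extend_inj_tuple[OF t, of "nth zs"] that(3) by (metis image_subset_iff lessThan_iff)
  qed
  obtain s where s: "\<forall>i<k. s i \<in> X" "inj_on s {..<k}" "\<forall>i<length xs. s i = xs ! i"
    using extends[of xs] assms by blast
  obtain s2 where s2: "\<forall>i<k. s2 i \<in> X" "inj_on s2 {..<k}" "\<forall>i<length ys. s2 i = ys ! i"
    using extends[of ys] assms by auto
  obtain g where g: "g \<in> G" "\<forall>i<k. act g (s i) = s2 i"
    using assms(1) s s2 unfolding k_transitive_def by blast
  have "act g (xs ! i) = ys ! i" if "i < length xs" for i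
    using g(2) s(3) s2(3) assms(2,3) that by (metis order_less_le_trans)
  then have "map (act g) xs = ys"
    using assms(3) by (simp add: list_eq_iff_nth_eq)
  with g(1) show ?thesis
    by (rule that)
qed

lemma k_transitive_3cycle:
  assumes "k_transitive G X act k" "3 \<le> k"
    and "x \<in> X" "y \<in> X" "z \<in> X" "distinct [x, y, z]"
  shows "\<exists>h\<in>G. act h x = y \<and> act h y = z \<and> act h z = x"
proof -
  have "length [x, y, z] \<le> k" "distinct [y, z, x]" "set [x, y, z] \<subseteq> X" "set [y, z, x] \<subseteq> X"
    using assms(2-6) by auto
  then obtain h where "h \<in> G" "map (act h) [x, y, z] = [y, z, x]"
    using k_transitive_map[OF assms(1)] assms(6) by (metis length_Cons)
  then show ?thesis
    by auto
qed

lemma k_transitive_two_points: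
  assumes "k_transitive G X act k" "2 \<le> k"
  obtains x y where "x \<in> X" "y \<in> X" "x \<noteq> y"
proof -
  obtain t where "\<forall>i<k. t i \<in> X" "inj_on t {..<k}"
    using assms(1) by (auto simp: k_transitive_def)
  then show ?thesis
    using that[of "t 0" "t 1"] assms(2) inj_onD[of t "{..<k}" 0 1] by auto
qed

lemma homeo_plus_bij: "homeo_plus g \<Longrightarrow> bij g"
  unfolding homeo_plus_def homeomorphism_def by (metis bij_betw_byWitness subset_UNIV)

lemma homeo_plus_Inf_image:
  assumes "homeo_plus h" "P \<noteq> {}" "bdd_below P"
  shows "h (Inf P) = Inf (h ` P)"
proof (rule continuous_at_Inf_mono)
  show "mono h"
    using assms(1) by (simp add: homeo_plus_def strict_mono_mono)
  have "continuous_on UNIV h"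
    using assms(1) homeomorphism_cont1 by (auto simp: homeo_plus_def)
  then show "continuous (at_right (Inf P)) h"
    by (simp add: continuous_on_eq_continuous_within continuous_at_imp_continuous_within)
qed (use assms in auto)

lemma homeo_plus_fixes_Inf_of_invariant:
  assumes "homeo_plus h" "h -` P = P" "P \<noteq> {}" "bdd_below P"
  shows "h (Inf P) = Inf P"
proof -
  have "h ` P = P"
    using assms(2) bij_is_surj[OF homeo_plus_bij[OF assms(1)]] by (metis surj_image_vimage_eq)
  then show ?thesis
    using homeo_plus_Inf_image[OF assms(1,3,4)] by simp
qed

locale homeo_action =
  fixes G :: "(real \<Rightarrow> real) set" and X :: "'x set" and act :: "(real \<Rightarrow> real) \<Rightarrow> 'x \<Rightarrow> 'x"
  assumes subgroup: "subgroup_homeo_plus G" and action: "group_action_on G X act"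
begin

lemma homeo_plus: "g \<in> G \<Longrightarrow> homeo_plus g"
  and comp_closed: "g \<in> G \<Longrightarrow> h \<in> G \<Longrightarrow> g \<circ> h \<in> G"
  and inv_closed: "g \<in> G \<Longrightarrow> inv g \<in> G"
  using subgroup by (auto simp: subgroup_homeo_plus_def)

lemma bij: "g \<in> G \<Longrightarrow> bij g"
  by (simp add: homeo_plus homeo_plus_bij)

lemma act_closed: "g \<in> G \<Longrightarrow> x \<in> X \<Longrightarrow> act g x \<in> X"
  and act_id: "x \<in> X \<Longrightarrow> act id x = x"
  and act_comp: "g \<in> G \<Longrightarrow> h \<in> G \<Longrightarrow> x \<in> X \<Longrightarrow> act (g \<circ> h) x = act g (act h x)"
  using action by (auto simp: group_action_on_def)

lemma act_inv:
  assumes "g \<in> G" "x \<in> X"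
  shows "act (inv g) (act g x) = x"
proof -
  have "inv g \<circ> g = id"
    using bij[OF assms(1)] by (simp add: bij_is_inj)
  then show ?thesis
    using act_comp[OF inv_closed[OF assms(1)] assms] act_id[OF assms(2)] by simp
qed

lemma act_eq_iff:
  assumes "g \<in> G" "x \<in> X" "y \<in> X"
  shows "act g x = act g y \<longleftrightarrow> x = y"
proof
  assume "act g x = act g y"
  then have "act (inv g) (act g x) = act (inv g) (act g y)"
    by simp
  then show "x = y"
    using act_inv assms by simp
qed simp

lemma invariant_upset_eq_UNIV:
  assumes no_fixed_point: "\<forall>x. \<exists>g\<in>G. g x \<noteq> x"
    and invariant: "\<And>h. h \<in> G \<Longrightarrow> h -` P = P"
    and upset: "\<And>s t. s \<in> P \<Longrightarrow> s \<le> t \<Longrightarrow> t \<in> P" and "P \<noteq> {}"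
  shows "P = UNIV"
proof (rule ccontr)
  assume "P \<noteq> UNIV"
  then obtain t where "t \<notin> P"
    by blast
  then have "t \<le> s" if "s \<in> P" for s
    using upset[OF that] by (cases "t \<le> s") auto
  then have "bdd_below P"
    by (rule bdd_belowI)
  obtain g where "g \<in> G" "g (Inf P) \<noteq> Inf P"
    using no_fixed_point by blast
  then show False
    using homeo_plus_fixes_Inf_of_invariant[OF homeo_plus invariant] \<open>P \<noteq> {}\<close> \<open>bdd_below P\<close>
    by blast
qed

definition thresholds :: "'x \<Rightarrow> 'x \<Rightarrow> real set" where
  "thresholds x y = {t. \<exists>a\<in>G. act a x = y \<and> (\<exists>p. moved a \<subseteq> {p<..<t})}"

lemma thresholds_upset:
  assumes "t \<in> thresholds x y" "t \<le> t'"
  shows "t' \<in> thresholds x y"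
proof -
  obtain a p where "a \<in> G" "act a x = y" "moved a \<subseteq> {p<..<t}"
    using assms(1) by (auto simp: thresholds_def)
  moreover have "{p<..<t} \<subseteq> {p<..<t'}"
    using assms(2) by auto
  ultimately show ?thesis
    by (auto simp: thresholds_def)
qed

lemma thresholds_sym:
  assumes "x \<in> X" "t \<in> thresholds x y"
  shows "t \<in> thresholds y x"
proof -
  obtain a p where "a \<in> G" "act a x = y" "moved a \<subseteq> {p<..<t}"
    using assms(2) by (auto simp: thresholds_def)
  then have "inv a \<in> G" "act (inv a) y = x" "moved (inv a) \<subseteq> {p<..<t}"
    using assms(1) by (auto simp: inv_closed act_inv moved_inv bij)
  then show ?thesis
    by (auto simp: thresholds_def)
qed

lemma thresholds_commute: "x \<in> X \<Longrightarrow> y \<in> X \<Longrightarrow> thresholds x y = thresholds y x"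
  using thresholds_sym by blast

lemma thresholds_conj:
  assumes "h \<in> G" "x \<in> X" "t \<in> thresholds x y"
  shows "h t \<in> thresholds (act h x) (act h y)"
proof -
  obtain a p where a: "a \<in> G" "act a x = y" "moved a \<subseteq> {p<..<t}"
    using assms(3) by (auto simp: thresholds_def)
  define b where "b = h \<circ> a \<circ> inv h"
  have "b \<in> G"
    unfolding b_def using assms(1) a(1) by (simp add: comp_closed inv_closed)
  moreover have "act b (act h x) = act h y"
    unfolding b_def using assms(1,2) a(1,2)
    by (simp add: act_comp act_closed act_inv comp_closed inv_closed)
  moreover have "moved b \<subseteq> {h p<..<h t}"
  proof -
    have "strict_mono h"
      using homeo_plus[OF assms(1)] by (simp add: homeo_plus_def)
    then have "h ` {p<..<t} \<subseteq> {h p<..<h t}"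
      by (auto simp: strict_mono_less)
    then show ?thesis
      unfolding b_def using moved_conj[OF bij[OF assms(1)]] a(3) by blast
  qed
  ultimately show ?thesis
    by (auto simp: thresholds_def)
qed

lemma thresholds_vimage:
  assumes "h \<in> G" "x \<in> X" "y \<in> X"
  shows "thresholds x y = h -` thresholds (act h x) (act h y)"
proof
  show "thresholds x y \<subseteq> h -` thresholds (act h x) (act h y)"
    using thresholds_conj[OF assms(1,2)] by blast
  show "h -` thresholds (act h x) (act h y) \<subseteq> thresholds x y"
  proof
    fix t
    assume "t \<in> h -` thresholds (act h x) (act h y)"
    then have "inv h (h t) \<in> thresholds (act (inv h) (act h x)) (act (inv h) (act h y))"
      using thresholds_conj[OF inv_closed act_closed] assms by blast
    then show "t \<in> thresholds x y"
      using assms by (simp add: act_inv bij bij_is_inj)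
  qed
qed

lemma thresholds_eq_if_3cycles:
  assumes cycles: "\<And>x y z. x \<in> X \<Longrightarrow> y \<in> X \<Longrightarrow> z \<in> X \<Longrightarrow> distinct [x, y, z] \<Longrightarrow>
      \<exists>h\<in>G. act h x = y \<and> act h y = z \<and> act h z = x"
    and "x \<in> X" "y \<in> X" "u \<in> X" "v \<in> X" "x \<noteq> y" "u \<noteq> v"
  shows "thresholds x y = thresholds u v"
proof -
  have cycle: "thresholds x y = thresholds y z"
    if xyz: "x \<in> X" "y \<in> X" "z \<in> X" "distinct [x, y, z]" for x y z
  proof -
    obtain h where h: "h \<in> G" "act h x = y" "act h y = z" "act h z = x"
      using cycles[OF xyz] by blast
    show ?thesis
    proof (rule vimage_3cycle_eq)
      show "thresholds x y = h -` thresholds y z"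
        using thresholds_vimage[OF h(1) xyz(1,2)] h by simp
      show "thresholds y z = h -` thresholds z x"
        using thresholds_vimage[OF h(1) xyz(2,3)] h by simp
      show "thresholds z x = h -` thresholds x y"
        using thresholds_vimage[OF h(1) xyz(3,1)] h by simp
      show "thresholds x y \<subseteq> thresholds y z \<or> thresholds y z \<subseteq> thresholds x y"
        by (rule upsets_comparable) (auto intro: thresholds_upset)
    qed
  qed
  have step: "thresholds x y = thresholds y z"
    if "x \<in> X" "y \<in> X" "z \<in> X" "x \<noteq> y" "y \<noteq> z" for x y z
  proof (cases "x = z")
    case True
    show ?thesis
      unfolding True by (rule thresholds_commute[OF that(3,2)])
  next
    case False
    show ?thesis
      by (rule cycle) (use that False in auto)
  qed
  show ?thesis
  proof (cases "y = u")
    case True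
    then show ?thesis
      using step[of x y v] assms(2-7) by simp
  next
    case False
    then show ?thesis
      using step[of x y u] step[of y u v] assms(2-7) by simp
  qed
qed

lemma thresholds_nonempty:
  assumes "g \<in> G" "compactly_supported g" "x \<in> X"
  shows "thresholds x (act g x) \<noteq> {}"
proof -
  have "bounded (moved g)"
    using assms(2) unfolding compactly_supported_def moved_def
    by (meson bounded_subset closure_subset compact_imp_bounded)
  then obtain B where "\<And>r. r \<in> moved g \<Longrightarrow> \<bar>r\<bar> \<le> B"
    by (auto simp: bounded_real)
  then have "moved g \<subseteq> {-B-1<..<B+1}"
    by force
  then have "B + 1 \<in> thresholds x (act g x)"
    using assms(1) by (auto simp: thresholds_def)
  then show ?thesis
    by blast
qed

lemma faithful_imp_thresholds_neq_UNIV: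
  assumes faithful: "faithful_action G X act" and x0y0: "x0 \<in> X" "y0 \<in> X" "x0 \<noteq> y0"
  shows "\<exists>x\<in>X. \<exists>y\<in>X. x \<noteq> y \<and> thresholds x y \<noteq> UNIV"
proof (rule ccontr)
  assume "\<not> ?thesis"
  then have transport: "\<exists>a\<in>G. act a x = y \<and> (\<exists>p. moved a \<subseteq> {p<..<t})"
    if "x \<in> X" "y \<in> X" "x \<noteq> y" for x y t
    using that by (fastforce simp: thresholds_def)
  obtain m1 p1 where m1: "m1 \<in> G" "act m1 x0 = y0" "moved m1 \<subseteq> {p1<..<0}"
    using transport[OF x0y0] by blast
  obtain m2 p2 where m2: "m2 \<in> G" "act m2 x0 = y0" "moved m2 \<subseteq> {p2<..<p1}"
    using transport[OF x0y0] by blast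
  have "moved m2 \<noteq> {}"
    using m2(2) x0y0 act_id by (auto simp: moved_empty_iff)
  then have "p2 < p1"
    using m2(3) by auto
  define c where "c = inv m1 \<circ> m2"
  have c: "c \<in> G" "act c x0 = x0"
    unfolding c_def using m1 m2 x0y0 by (auto simp: comp_closed inv_closed act_comp act_inv)
  have "moved c \<subseteq> moved m1 \<union> moved m2"
    unfolding c_def using moved_comp moved_inv[OF bij[OF m1(1)]] by metis
  then have moved_c: "moved c \<subseteq> {p2<..}"
    using m1(3) m2(3) \<open>p2 < p1\<close> by fastforce
  have "act c z = z" if z: "z \<in> X" for z
  proof (cases "z = x0")
    case False
    then obtain n where n: "n \<in> G" "act n x0 = z" "moved n \<subseteq> {..<p2}"
      using transport[OF x0y0(1) z] by fastforce
    have "moved c \<inter> moved n = {}"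
      using moved_c n(3) by fastforce
    then have "c \<circ> n = n \<circ> c"
      by (intro comp_commute_if_disjoint_moved bij_is_inj bij c(1) n(1))
    then show ?thesis
      using act_comp[OF c(1) n(1) x0y0(1)] act_comp[OF n(1) c(1) x0y0(1)] c(2) n(2) by simp
  qed (use c in simp)
  then have "c = id"
    using faithful c(1) by (simp add: faithful_action_def)
  moreover have "m1 \<circ> inv m1 = id"
    using bij_is_surj[OF bij[OF m1(1)]] by (simp add: surj_iff)
  then have "m2 = m1 \<circ> c"
    unfolding c_def by (simp add: o_assoc)
  ultimately have "m2 = m1"
    by simp
  then have "moved m1 = {}"
    using m1(3) m2(3) by (fastforce simp: subset_iff)
  then show False
    using m1(2) x0y0 act_id by (simp add: moved_empty_iff)
qed

lemma thresholds_eq_UNIV: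
  assumes no_fixed_point: "\<forall>x. \<exists>g\<in>G. g x \<noteq> x"
    and compact_support: "\<exists>g\<in>G. g \<noteq> id \<and> compactly_supported g"
    and faithful: "faithful_action G X act"
    and cycles: "\<And>x y z. x \<in> X \<Longrightarrow> y \<in> X \<Longrightarrow> z \<in> X \<Longrightarrow> distinct [x, y, z] \<Longrightarrow>
      \<exists>h\<in>G. act h x = y \<and> act h y = z \<and> act h z = x"
    and xy: "x \<in> X" "y \<in> X" "x \<noteq> y"
  shows "thresholds x y = UNIV"
proof (rule invariant_upset_eq_UNIV[OF no_fixed_point])
  have const: "thresholds u v = thresholds x y" if "u \<in> X" "v \<in> X" "u \<noteq> v" for u v
    using thresholds_eq_if_3cycles[OF cycles that(1,2) xy(1,2) that(3) xy(3)] .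
  show "h -` thresholds x y = thresholds x y" if "h \<in> G" for h
  proof -
    have "act h x \<noteq> act h y"
      using act_eq_iff[OF that xy(1,2)] xy(3) by simp
    then have "thresholds (act h x) (act h y) = thresholds x y"
      using const act_closed[OF that] xy(1,2) by simp
    then show ?thesis
      using thresholds_vimage[OF that xy(1,2)] by simp
  qed
  show "s \<in> thresholds x y \<Longrightarrow> s \<le> t \<Longrightarrow> t \<in> thresholds x y" for s t
    by (rule thresholds_upset)
  obtain g where g: "g \<in> G" "g \<noteq> id" "compactly_supported g"
    using compact_support by blast
  then obtain z where z: "z \<in> X" "act g z \<noteq> z"
    using faithful by (auto simp: faithful_action_def)
  then have "thresholds z (act g z) = thresholds x y"
    using const[OF z(1) act_closed[OF g(1) z(1)]] by simp
  then show "thresholds x y \<noteq> {}"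
    using thresholds_nonempty[OF g(1,3) z(1)] by simp
qed

end

theorem proposition5p2:
  fixes G :: "(real \<Rightarrow> real) set"
    and X :: "'x set" and act :: "(real \<Rightarrow> real) \<Rightarrow> 'x \<Rightarrow> 'x" and k :: nat
  assumes "subgroup_homeo_plus G"
    and "\<forall>x. \<exists>g\<in>G. g x \<noteq> x"
    and "\<exists>g\<in>G. g \<noteq> id \<and> compactly_supported g"
    and "group_action_on G X act"
    and "faithful_action G X act"
    and "k_transitive G X act k"
  shows "k \<le> 2"
proof (rule ccontr)
  assume "\<not> k \<le> 2"
  interpret homeo_action G X act
    using assms(1,4) by unfold_locales
  have cycles: "\<exists>h\<in>G. act h x = y \<and> act h y = z \<and> act h z = x"
    if "x \<in> X" "y \<in> X" "z \<in> X" "distinct [x, y, z]" for x y z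
    using k_transitive_3cycle[OF assms(6) _ that] \<open>\<not> k \<le> 2\<close> by simp
  obtain x0 y0 where x0y0: "x0 \<in> X" "y0 \<in> X" "x0 \<noteq> y0"
    by (rule k_transitive_two_points[OF assms(6)]) (use \<open>\<not> k \<le> 2\<close> in simp)
  show False
    using faithful_imp_thresholds_neq_UNIV[OF assms(5) x0y0]
      thresholds_eq_UNIV[OF assms(2,3,5) cycles] by blast
qed

end
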